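(* Let $\mathsf{A}\subset GL_2(\mathbb{R})$ with $\mathscr{R}(\mathsf{A})\neq\emptyset$ be such that $\mathcal{S}(\mathsf{A})$ is almost multiplicative. Then $\mathcal{S}(\mathsf{A})$ does not contain parabolic elements and $\mathscr{R}(\mathsf{A})$ does not contain nilpotent elements.
   Context: $\|\cdot\|$ is the operator norm. $\mathcal{S}(\mathsf{A})$ is the semigroup of finite products of elements of $\mathsf{A}$; $\mathscr{S}(\mathsf{A})=\overline{\mathbb{R}\mathcal{S}(\mathsf{A})}\subset M_2(\mathbb{R})$; $\mathscr{R}(\mathsf{A})=\{A\in\mathscr{S}(\mathsf{A}):\operatorname{rank}(A)=1\}$. A semigroup $\mathcal{S}$ is almost multiplicative if there is $\kappa>0$ with $\|AB\|\ge\kappa\|A\|\|B\|$ for all $A,B\in\mathcal{S}$. A matrix is parabolic if it has only one eigenspace (its single eigenvalue has geometric multiplicity one). *)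

theory Defs
  imports "HOL-Analysis.Analysis"
begin

type_synonym mat2 = "real^2^2"

definition opnorm :: "mat2 \<Rightarrow> real" where
  "opnorm M = onorm (\<lambda>x. M *v x)"

definition semigrp :: "mat2 set \<Rightarrow> mat2 set" where
  "semigrp A = {M. \<exists>xs. xs \<noteq> [] \<and> set xs \<subseteq> A \<and> M = foldr (**) xs (mat 1)}"

definition scaled_closure :: "mat2 set \<Rightarrow> mat2 set" where
  "scaled_closure A = closure {c *\<^sub>R M | c M. M \<in> semigrp A}"

definition rank_one_part :: "mat2 set \<Rightarrow> mat2 set" where
  "rank_one_part A = {M \<in> scaled_closure A. rank M = 1}"

definition almost_multiplicative :: "mat2 set \<Rightarrow> bool" where
  "almost_multiplicative S \<longleftrightarrow>
     (\<exists>\<kappa>>0. \<forall>A\<in>S. \<forall>B\<in>S. opnorm (A ** B) \<ge> \<kappa> * opnorm A * opnorm B)"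

definition is_eigenvalue :: "mat2 \<Rightarrow> real \<Rightarrow> bool" where
  "is_eigenvalue M l \<longleftrightarrow> (\<exists>v. v \<noteq> 0 \<and> M *v v = l *\<^sub>R v)"

definition eigenspace :: "mat2 \<Rightarrow> real \<Rightarrow> (real^2) set" where
  "eigenspace M l = {v. M *v v = l *\<^sub>R v}"

definition parabolic :: "mat2 \<Rightarrow> bool" where
  "parabolic M \<longleftrightarrow>
     (\<exists>l. (\<forall>m. is_eigenvalue M m \<longleftrightarrow> m = l) \<and> dim (eigenspace M l) = 1)"

fun mat_pow :: "mat2 \<Rightarrow> nat \<Rightarrow> mat2" where
  "mat_pow M 0 = mat 1"
| "mat_pow M (Suc k) = M ** mat_pow M k"

definition nilpotent :: "mat2 \<Rightarrow> bool" where
  "nilpotent M \<longleftrightarrow> (\<exists>k. mat_pow M k = 0)"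

end

theory Submission
  imports Defs
begin

(* Almost multiplicativity gives kappa * |X|^2 <= |X^2| on S(A); by continuity and homogeneity
   this persists on the closure of R S(A), which contains R(A). A nilpotent 2x2 matrix squares to zero, so no nonzero
   element of R(A) is nilpotent. A parabolic M is l I + N with N^2 = 0, N nonzero; for l = 0 this
   contradicts the bound at M itself, and otherwise M^n = l^n (I + (n/l) N), so the bound applied
   to M^n compares |I + (2n/l) N|, which grows linearly in n, with kappa |I + (n/l) N|^2, which
   grows quadratically. *)

lemma mat2_eq_iff:
  "(X::mat2) = Y \<longleftrightarrow> X$1$1 = Y$1$1 \<and> X$1$2 = Y$1$2 \<and> X$2$1 = Y$2$1 \<and> X$2$2 = Y$2$2"
  by (auto simp: vec_eq_iff forall_2)

lemma mat2_mult_nth: "((X::mat2) ** Y)$i$j = X$i$1 * Y$1$j + X$i$2 * Y$2$j"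
  by (simp add: matrix_matrix_mult_def sum_2)

lemma mat2_cayley_hamilton: "(X::mat2) ** X = trace X *\<^sub>R X - det X *\<^sub>R mat 1"
  by (simp add: mat2_eq_iff mat2_mult_nth trace_def sum_2 det_2 mat_def algebra_simps)

lemma det_mat2_sub_scalar: "det ((M::mat2) - m *\<^sub>R mat 1) = m\<^sup>2 - m * trace M + det M"
  by (simp add: det_2 trace_def sum_2 mat_def power2_eq_square algebra_simps)

lemma det_eq_0_iff_nonzero_kernel:
  fixes M :: "real^'n^'n"
  shows "det M = 0 \<longleftrightarrow> (\<exists>v. v \<noteq> 0 \<and> M *v v = 0)"
proof -
  have "rank M \<le> CARD('n)"
    using rank_bound[of M] by simp
  then show ?thesis
    unfolding det_eq_0_rank matrix_nonfull_linear_equations_eq by linarith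
qed

lemma is_eigenvalue_iff_det: "is_eigenvalue M m \<longleftrightarrow> det (M - m *\<^sub>R mat 1) = 0"
  by (simp add: is_eigenvalue_def det_eq_0_iff_nonzero_kernel matrix_vector_mult_diff_rdistrib
      scaleR_matrix_vector_assoc[symmetric])

lemma parabolic_imp_scalar_plus_square_zero:
  assumes "parabolic M"
  obtains l N where "M = l *\<^sub>R mat 1 + N" "N ** N = 0" "N \<noteq> 0"
proof -
  obtain l where unique: "\<And>m. is_eigenvalue M m \<longleftrightarrow> m = l" and dim: "dim (eigenspace M l) = 1"
    using assms unfolding parabolic_def by blast
  have "det (M - l *\<^sub>R mat 1) = 0"
    using unique is_eigenvalue_iff_det by blast
  \<comment> \<open>the characteristic polynomial is symmetric under \<open>m \<mapsto> trace M - m\<close>\<close>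
  moreover have "det (M - (trace M - l) *\<^sub>R mat 1) = det (M - l *\<^sub>R mat 1)"
    unfolding det_mat2_sub_scalar by (simp add: power2_eq_square algebra_simps)
  ultimately have "is_eigenvalue M (trace M - l)"
    by (simp add: is_eigenvalue_iff_det)
  then have trace: "trace M = 2 * l"
    using unique by auto
  define N where "N = M - l *\<^sub>R mat 1"
  have "trace N = 0" "det N = 0"
    using trace \<open>det (M - l *\<^sub>R mat 1) = 0\<close> by (simp_all add: N_def trace_sub trace_def sum_2 mat_def)
  then have "N ** N = 0"
    by (simp add: mat2_cayley_hamilton)
  moreover have "N \<noteq> 0"
  proof
    assume "N = 0"
    then have "eigenspace M l = UNIV"
      by (simp add: N_def eigenspace_def scaleR_matrix_vector_assoc[symmetric])
    with dim show False by simp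
  qed
  ultimately show thesis
    using that[of l N] by (simp add: N_def)
qed

lemma matrix_add_rdistrib: "(A + B) ** C = A ** C + B ** C"
  by (vector matrix_matrix_mult_def sum.distrib[symmetric] field_simps)

lemma mat_pow_add: "mat_pow M (m + n) = mat_pow M m ** mat_pow M n"
  by (induction m) (auto simp: matrix_mul_assoc)

lemma det_mat_pow: "det (mat_pow M n) = det M ^ n"
  by (induction n) (simp_all add: det_mul)

lemma mat_pow_scalar_plus_square_zero:
  assumes "N ** N = 0"
  shows "mat_pow (l *\<^sub>R mat 1 + N) n = (l ^ n) *\<^sub>R mat 1 + (real n * l ^ (n - 1)) *\<^sub>R N"
proof (induction n)
  case (Suc n)
  have "l * (real n * l ^ (n - 1)) + l ^ n = real (Suc n) * l ^ n"
    by (cases n) (simp_all add: algebra_simps)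
  with Suc assms show ?case
    by (simp add: matrix_add_ldistrib matrix_add_rdistrib matrix_scalar_ac scalar_matrix_assoc[symmetric]
        scaleR_add_left algebra_simps)
qed simp

lemma nilpotent_imp_square_zero:
  assumes "nilpotent M"
  shows "M ** M = 0"
proof -
  obtain k where k: "mat_pow M k = 0"
    using assms unfolding nilpotent_def by blast
  have "det M ^ k = 0"
    using arg_cong[OF k, of det] by (simp add: det_mat_pow flip: mat_0)
  then have "det M = 0" and "k \<noteq> 0"
    by simp_all
  then have square: "M ** M = trace M *\<^sub>R M"
    by (simp add: mat2_cayley_hamilton)
  have power: "mat_pow M (Suc j) = (trace M ^ j) *\<^sub>R M" for j
    by (induction j) (simp_all add: square matrix_scalar_ac scalar_matrix_assoc[symmetric] matrix_mul_assoc)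
  have "(trace M ^ (k - 1)) *\<^sub>R M = 0"
    using k power[of "k - 1"] \<open>k \<noteq> 0\<close> by simp
  then have "trace M = 0 \<or> M = 0"
    by auto
  then show ?thesis
    using square by auto
qed

lemma semigrp_mult:
  assumes "X \<in> semigrp A" "Y \<in> semigrp A"
  shows "X ** Y \<in> semigrp A"
proof -
  obtain xs ys where "xs \<noteq> []" "set xs \<subseteq> A" "X = foldr (**) xs (mat 1)"
    and "ys \<noteq> []" "set ys \<subseteq> A" "Y = foldr (**) ys (mat 1)"
    using assms unfolding semigrp_def by blast
  moreover have "foldr (**) xs Y = foldr (**) xs (mat 1) ** Y"
    by (induction xs) (simp_all add: matrix_mul_assoc)
  ultimately show ?thesis
    unfolding semigrp_def by (intro CollectI exI[of _ "xs @ ys"]) auto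
qed

lemma mat_pow_in_semigrp: "M \<in> semigrp A \<Longrightarrow> n \<noteq> 0 \<Longrightarrow> mat_pow M n \<in> semigrp A"
proof (induction n)
  case (Suc n)
  show ?case
  proof (cases "n = 0")
    case False
    then show ?thesis
      using Suc semigrp_mult by simp
  qed (use Suc in simp)
qed simp

lemma opnorm_triangle: "opnorm (X + Y) \<le> opnorm X + opnorm Y"
  unfolding opnorm_def matrix_vector_mult_add_rdistrib by (rule onorm_triangle) auto

lemma opnorm_scaleR: "opnorm (c *\<^sub>R X) = \<bar>c\<bar> * opnorm X"
  unfolding opnorm_def scaleR_matrix_vector_assoc[symmetric] by (rule onorm_scaleR) auto

lemma opnorm_mat_1: "opnorm (mat 1) = 1"
  by (simp add: opnorm_def onorm_id[unfolded id_def])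

lemma opnorm_0: "opnorm 0 = 0"
  using opnorm_scaleR[of 0 "mat 1"] by simp

lemma opnorm_pos: "X \<noteq> 0 \<Longrightarrow> opnorm X > 0"
  unfolding opnorm_def by (subst onorm_pos_lt) (auto simp: matrix_eq)

lemma opnorm_le_norm: "opnorm X \<le> 4 * norm X"
proof -
  have "\<bar>X$i$j\<bar> \<le> norm X" for i j
    using component_le_norm_cart[of "X$i" j] Finite_Cartesian_Product.norm_nth_le[of X i] by linarith
  then show ?thesis
    using onorm_le_matrix_component[of X "norm X"] by (simp add: opnorm_def)
qed

lemma continuous_on_opnorm: "continuous_on UNIV opnorm"
proof (rule lipschitz_on_continuous_on)
  show "4-lipschitz_on UNIV opnorm"
  proof (rule lipschitz_onI)
    fix X Y :: mat2
    have "opnorm X \<le> opnorm Y + opnorm (X - Y)" "opnorm Y \<le> opnorm X + opnorm (Y - X)"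
      using opnorm_triangle[of Y "X - Y"] opnorm_triangle[of X "Y - X"] by simp_all
    then show "dist (opnorm X) (opnorm Y) \<le> 4 * dist X Y"
      using opnorm_le_norm[of "X - Y"] opnorm_le_norm[of "Y - X"]
      by (simp add: dist_real_def dist_norm norm_minus_commute)
  qed simp
qed

lemma opnorm_shear_bounds:
  shows "\<bar>k\<bar> * opnorm N - 1 \<le> opnorm (mat 1 + k *\<^sub>R N)"
    and "opnorm (mat 1 + k *\<^sub>R N) \<le> 1 + \<bar>k\<bar> * opnorm N"
proof -
  have "opnorm (k *\<^sub>R N) \<le> opnorm (mat 1 + k *\<^sub>R N) + opnorm ((-1) *\<^sub>R (mat 1 :: mat2))"
    using opnorm_triangle[of "mat 1 + k *\<^sub>R N" "(-1) *\<^sub>R mat 1"] by simp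
  then show "\<bar>k\<bar> * opnorm N - 1 \<le> opnorm (mat 1 + k *\<^sub>R N)"
    by (simp only: opnorm_scaleR opnorm_mat_1)
  show "opnorm (mat 1 + k *\<^sub>R N) \<le> 1 + \<bar>k\<bar> * opnorm N"
    using opnorm_triangle[of "mat 1" "k *\<^sub>R N"] by (simp add: opnorm_scaleR opnorm_mat_1)
qed

lemma shear_square_growth:
  assumes "N \<noteq> 0" "\<kappa> > 0" "c \<noteq> 0"
  obtains n :: nat where "n \<noteq> 0"
    "opnorm (mat 1 + (2 * real n * c) *\<^sub>R N) < \<kappa> * (opnorm (mat 1 + (real n * c) *\<^sub>R N))\<^sup>2"
proof -
  define a where "a = \<bar>c\<bar> * opnorm N"
  have "a > 0"
    using assms opnorm_pos[of N] by (simp add: a_def)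
  obtain n :: nat where n: "real n > (3 + 5 / \<kappa>) / a"
    using reals_Archimedean2 by blast
  define t where "t = real n * a"
  have t: "t > 3 + 5 / \<kappa>"
    using n \<open>a > 0\<close> by (simp add: t_def field_simps)
  moreover have "5 / \<kappa> > 0"
    using \<open>\<kappa> > 0\<close> by simp
  ultimately have "t > 3" "t - 1 > 5 / \<kappa>"
    by linarith+
  then have "\<kappa> * (t - 1) > 5"
    using \<open>\<kappa> > 0\<close> by (simp add: field_simps)
  have "t - 1 \<le> opnorm (mat 1 + (real n * c) *\<^sub>R N)"
    using opnorm_shear_bounds(1)[of "real n * c" N] by (simp add: t_def a_def abs_mult)
  then have "\<kappa> * (t - 1)\<^sup>2 \<le> \<kappa> * (opnorm (mat 1 + (real n * c) *\<^sub>R N))\<^sup>2"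
    using \<open>t > 3\<close> \<open>\<kappa> > 0\<close> by (intro mult_left_mono power_mono) auto
  moreover have "1 + 2 * t < \<kappa> * (t - 1)\<^sup>2"
  proof -
    have "5 * (t - 1) < \<kappa> * (t - 1) * (t - 1)"
      using \<open>t > 3\<close> \<open>\<kappa> * (t - 1) > 5\<close> by (intro mult_strict_right_mono) auto
    then show ?thesis
      using \<open>t > 3\<close> by (simp add: power2_eq_square mult.assoc)
  qed
  moreover have "opnorm (mat 1 + (2 * real n * c) *\<^sub>R N) \<le> 1 + 2 * t"
    using opnorm_shear_bounds(2)[of "2 * real n * c" N] by (simp add: t_def a_def abs_mult)
  moreover have "n \<noteq> 0"
    using \<open>t > 3\<close> by (auto simp: t_def intro: gr0I)
  ultimately show thesis
    using that by fastforce
qed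

lemma square_bound_closure:
  assumes bound: "\<forall>X\<in>S. \<kappa> * (opnorm X)\<^sup>2 \<le> opnorm (X ** X)"
    and X: "X \<in> closure {c *\<^sub>R M | c M. M \<in> S}"
  shows "\<kappa> * (opnorm X)\<^sup>2 \<le> opnorm (X ** X)"
proof -
  let ?C = "{X :: mat2. \<kappa> * (opnorm X)\<^sup>2 \<le> opnorm (X ** X)}"
  have "continuous_on UNIV (\<lambda>X :: mat2. X ** X)"
    unfolding matrix_matrix_mult_def by (intro continuous_intros)
  then have "closed ?C"
    using continuous_on_opnorm
    by (intro closed_Collect_le continuous_on_compose2[OF continuous_on_opnorm] continuous_intros) auto
  moreover have "c *\<^sub>R M \<in> ?C" if "M \<in> S" for c M
  proof -
    have "c\<^sup>2 * (\<kappa> * (opnorm M)\<^sup>2) \<le> c\<^sup>2 * opnorm (M ** M)"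
      using bound that by (simp add: mult_left_mono)
    then show ?thesis
      by (simp add: opnorm_scaleR matrix_scalar_ac scalar_matrix_assoc[symmetric] power_mult_distrib
          power2_eq_square ac_simps)
  qed
  then have "{c *\<^sub>R M | c M. M \<in> S} \<subseteq> ?C"
    by blast
  ultimately show ?thesis
    using X closure_minimal by blast
qed

lemma almost_multiplicative_square_bound:
  assumes "almost_multiplicative S"
  obtains \<kappa> where "\<kappa> > 0" "\<forall>X\<in>S. \<kappa> * (opnorm X)\<^sup>2 \<le> opnorm (X ** X)"
  using assms unfolding almost_multiplicative_def by (metis power2_eq_square mult.assoc)

lemma almost_multiplicative_not_parabolic:
  assumes "almost_multiplicative (semigrp A)" and "M \<in> semigrp A"
  shows "\<not> parabolic M"
proof
  assume "parabolic M"
  then obtain l N where M: "M = l *\<^sub>R mat 1 + N" and "N ** N = 0" "N \<noteq> 0"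
    by (rule parabolic_imp_scalar_plus_square_zero)
  obtain \<kappa> where "\<kappa> > 0" and bound: "\<forall>X\<in>semigrp A. \<kappa> * (opnorm X)\<^sup>2 \<le> opnorm (X ** X)"
    using assms(1) by (rule almost_multiplicative_square_bound)
  show False
  proof (cases "l = 0")
    case True
    then have "\<kappa> * (opnorm N)\<^sup>2 \<le> 0"
      using bound assms(2) M \<open>N ** N = 0\<close> opnorm_0 by force
    then show False
      using \<open>\<kappa> > 0\<close> opnorm_pos[OF \<open>N \<noteq> 0\<close>] by (simp add: mult_le_0_iff)
  next
    case False
    define P where "P k = mat 1 + (real k * (1 / l)) *\<^sub>R N" for k :: nat
    have "mat_pow M k = l ^ k *\<^sub>R P k" for k
    proof -
      have "real k * l ^ (k - 1) = l ^ k * (real k * (1 / l))"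
        using False by (cases k) simp_all
      then show ?thesis
        unfolding M mat_pow_scalar_plus_square_zero[OF \<open>N ** N = 0\<close>]
        by (simp add: P_def scaleR_add_right)
    qed
    then have norm_pow: "opnorm (mat_pow M k) = \<bar>l\<bar> ^ k * opnorm (P k)" for k
      by (simp add: opnorm_scaleR power_abs)
    obtain n :: nat where "n \<noteq> 0" and growth: "opnorm (P (2 * n)) < \<kappa> * (opnorm (P n))\<^sup>2"
      using shear_square_growth[OF \<open>N \<noteq> 0\<close> \<open>\<kappa> > 0\<close>, of "1 / l"] False by (auto simp: P_def)
    have "mat_pow M n ** mat_pow M n = mat_pow M (2 * n)"
      by (simp add: mat_pow_add[symmetric] mult_2)
    then have "\<kappa> * (opnorm (mat_pow M n))\<^sup>2 \<le> opnorm (mat_pow M (2 * n))"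
      using bound mat_pow_in_semigrp[OF assms(2) \<open>n \<noteq> 0\<close>] by metis
    then have "\<bar>l\<bar> ^ (2 * n) * (\<kappa> * (opnorm (P n))\<^sup>2) \<le> \<bar>l\<bar> ^ (2 * n) * opnorm (P (2 * n))"
      by (simp add: norm_pow power_mult_distrib power_mult[symmetric] mult.commute[of 2] ac_simps)
    then show False
      using growth False by simp
  qed
qed

lemma almost_multiplicative_rank_one_not_nilpotent:
  assumes "almost_multiplicative (semigrp A)" and "R \<in> rank_one_part A"
  shows "\<not> nilpotent R"
proof
  assume "nilpotent R"
  obtain \<kappa> where "\<kappa> > 0" and bound: "\<forall>X\<in>semigrp A. \<kappa> * (opnorm X)\<^sup>2 \<le> opnorm (X ** X)"
    using assms(1) by (rule almost_multiplicative_square_bound)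
  have "R \<noteq> 0"
    using assms(2) by (auto simp: rank_one_part_def)
  have "\<kappa> * (opnorm R)\<^sup>2 \<le> opnorm (R ** R)"
    using square_bound_closure[OF bound] assms(2) by (simp add: rank_one_part_def scaled_closure_def)
  then show False
    using nilpotent_imp_square_zero[OF \<open>nilpotent R\<close>] \<open>\<kappa> > 0\<close> opnorm_pos[OF \<open>R \<noteq> 0\<close>]
    by (simp add: opnorm_0 mult_le_0_iff)
qed

theorem lemma3p2:
  fixes A :: "(real^2^2) set"
  assumes "\<forall>M\<in>A. invertible M"
    and "rank_one_part A \<noteq> {}"
    and "almost_multiplicative (semigrp A)"
  shows "(\<forall>M\<in>semigrp A. \<not> parabolic M) \<and> (\<forall>M\<in>rank_one_part A. \<not> nilpotent M)"
  using almost_multiplicative_not_parabolic[OF assms(3)]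
    almost_multiplicative_rank_one_not_nilpotent[OF assms(3)] by blast

end
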